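(* Let $J\subset \mathbb{C}[x_1,y_1,\dots,x_n,y_n]$ be the vanishing ideal of an $\mathfrak S_n$-cluster on $(\mathbb{A}^2)^n$, i.e.\ an $\mathfrak S_n$-invariant ideal such that $\mathbb{C}[x_1,y_1,\dots,x_n,y_n]/J$ is isomorphic as an $\mathfrak S_n$-representation to the regular representation $\mathbb{C}[\mathfrak S_n]$, where $\mathfrak S_n$ acts by permuting the index of the pairs $(x_i,y_i)$. Then for every $1\le k\le n$ the inclusion $\mathbb{C}[x_1,y_1,\dots,x_k,y_k]\hookrightarrow \mathbb{C}[x_1,y_1,\dots,x_n,y_n]$ induces an isomorphism \[\mathbb{C}[x_1,y_1,\dots,x_k,y_k]/\bigl(J\cap \mathbb{C}[x_1,y_1,\dots,x_k,y_k]\bigr)\xrightarrow{\ \cong\ } \bigl(\mathbb{C}[x_1,y_1,\dots,x_n,y_n]/J\bigr)^{\mathfrak S_{n-k}},\] where $\mathfrak S_{n-k}$ is the subgroup of $\mathfrak S_n$ permuting the indices $k+1,\dots,n$. *)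

theory Defs
  imports Complex_Main "HOL-Library.Poly_Mapping" "HOL-Combinatorics.Permutations"
begin

text \<open>Polynomials in the variables x_i = (i, False), y_i = (i, True), i \<ge> 1,
  with complex coefficients: a finitely supported map from monomials
  (finitely supported exponent vectors) to coefficients.\<close>
type_synonym var = "nat \<times> bool"
type_synonym cpoly = "(var \<Rightarrow>\<^sub>0 nat) \<Rightarrow>\<^sub>0 complex"

definition polyring :: "nat \<Rightarrow> cpoly set" where
  "polyring k = {f. \<forall>m \<in> Poly_Mapping.keys f. \<forall>v \<in> Poly_Mapping.keys m. fst v \<in> {1..k}}"

definition cscale :: "complex \<Rightarrow> cpoly \<Rightarrow> cpoly" where
  "cscale c f = Poly_Mapping.map (\<lambda>a. c * a) f"

text \<open>Action of a permutation sigma of the indices: x_i \<mapsto> x_(sigma i), y_i \<mapsto> y_(sigma i).\<close>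
definition vshift :: "(nat \<Rightarrow> nat) \<Rightarrow> var \<Rightarrow> var" where
  "vshift \<sigma> v = (\<sigma> (fst v), snd v)"

definition pact :: "(nat \<Rightarrow> nat) \<Rightarrow> cpoly \<Rightarrow> cpoly" where
  "pact \<sigma> f = Poly_Mapping.map_key (\<lambda>m. Poly_Mapping.map_key (vshift \<sigma>) m) f"

definition is_ideal_in :: "cpoly set \<Rightarrow> cpoly set \<Rightarrow> bool" where
  "is_ideal_in R J \<longleftrightarrow> J \<subseteq> R \<and> 0 \<in> J \<and> (\<forall>a\<in>J. \<forall>b\<in>J. a + b \<in> J)
      \<and> (\<forall>r\<in>R. \<forall>a\<in>J. r * a \<in> J)"

text \<open>The regular representation C[S_n]: complex functions on the permutations of {1..n}
  (zero elsewhere), with left action (sigma g)(tau) = g(sigma^-1 tau).\<close>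
definition regrep :: "nat \<Rightarrow> ((nat \<Rightarrow> nat) \<Rightarrow> complex) set" where
  "regrep n = {g. \<forall>\<tau>. \<not> \<tau> permutes {1..n} \<longrightarrow> g \<tau> = 0}"

definition regact :: "(nat \<Rightarrow> nat) \<Rightarrow> ((nat \<Rightarrow> nat) \<Rightarrow> complex) \<Rightarrow> ((nat \<Rightarrow> nat) \<Rightarrow> complex)" where
  "regact \<sigma> g = (\<lambda>\<tau>. g (inv \<sigma> \<circ> \<tau>))"

text \<open>The quotient R/J is encoded by a C-linear S_n-equivariant surjection R \<rightarrow> C[S_n] with kernel J.\<close>
definition Sn_cluster_ideal :: "nat \<Rightarrow> cpoly set \<Rightarrow> bool" where
  "Sn_cluster_ideal n J \<longleftrightarrow>
     is_ideal_in (polyring n) J \<and>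
     (\<forall>\<sigma>. \<sigma> permutes {1..n} \<longrightarrow> (\<forall>f\<in>J. pact \<sigma> f \<in> J)) \<and>
     (\<exists>\<phi> :: cpoly \<Rightarrow> (nat \<Rightarrow> nat) \<Rightarrow> complex. (\<forall>f\<in>polyring n. \<forall>g\<in>polyring n. \<phi> (f + g) = (\<lambda>\<tau>. \<phi> f \<tau> + \<phi> g \<tau>)) \<and>
          (\<forall>c. \<forall>f\<in>polyring n. \<phi> (cscale c f) = (\<lambda>\<tau>. c * \<phi> f \<tau>)) \<and>
          \<phi> ` polyring n = regrep n \<and>
          (\<forall>f\<in>polyring n. \<phi> f = (\<lambda>\<tau>. 0) \<longleftrightarrow> f \<in> J) \<and>
          (\<forall>\<sigma> f. \<sigma> permutes {1..n} \<longrightarrow> f \<in> polyring n \<longrightarrow> \<phi> (pact \<sigma> f) = regact \<sigma> (\<phi> f)))"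

definition coset :: "cpoly set \<Rightarrow> cpoly \<Rightarrow> cpoly set" where
  "coset I f = {f + a | a. a \<in> I}"

definition quotient_space :: "cpoly set \<Rightarrow> cpoly set \<Rightarrow> cpoly set set" where
  "quotient_space R I = coset I ` R"

definition invariant_classes :: "nat \<Rightarrow> nat \<Rightarrow> cpoly set \<Rightarrow> cpoly set set" where
  "invariant_classes n k J = {C \<in> quotient_space (polyring n) J.
       \<forall>\<sigma>. \<sigma> permutes {k+1..n} \<longrightarrow> pact \<sigma> ` C = C}"

text \<open>The map R_k/(J \<inter> R_k) \<rightarrow> R_n/J induced by the inclusion: f + (J\<inter>R_k) \<mapsto> f + J.\<close>
definition induced_map :: "cpoly set \<Rightarrow> cpoly set \<Rightarrow> cpoly set" where
  "induced_map J C = {g + a | g a. g \<in> C \<and> a \<in> J}"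

end

theory Submission
  imports Defs
begin

text \<open>Since \<open>\<complex>[x,y]/J\<close> is the regular representation of \<open>\<SS>\<^sub>n\<close>, its invariants are
  one-dimensional, so every \<open>\<SS>\<^sub>n\<close>-invariant polynomial, in particular every power sum
  \<open>p\<^sub>a\<^sub>,\<^sub>b = \<Sum>\<^sub>j x\<^sub>j\<^sup>a y\<^sub>j\<^sup>b\<close>, is congruent to a constant modulo \<open>J\<close>.
  A class invariant under \<open>\<SS>\<^sub>n\<^sub>-\<^sub>k\<close> is then pushed into \<open>\<complex>[x\<^sub>1,y\<^sub>1,\<dots>,x\<^sub>k,y\<^sub>k]\<close>
  by removing one pair of variables at a time: if \<open>h\<close> involves only the first \<open>k+1\<close> pairs
  and is invariant modulo \<open>J\<close> under the transpositions \<open>(k+1 j)\<close>, \<open>j > k\<close>, then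
  \<open>(n-k) h \<equiv> \<Sum>\<^sub>j (k+1 j) h\<close>, and for a monomial \<open>m x\<^sub>k\<^sub>+\<^sub>1\<^sup>a y\<^sub>k\<^sub>+\<^sub>1\<^sup>b\<close> this sum is
  \<open>m (p\<^sub>a\<^sub>,\<^sub>b - \<Sum>\<^sub>j\<^sub>\<le>\<^sub>k x\<^sub>j\<^sup>a y\<^sub>j\<^sup>b)\<close>, which modulo \<open>J\<close> involves only the first \<open>k\<close> pairs.
  This gives surjectivity; injectivity is immediate.\<close>

section \<open>The permutation action on monomials and polynomials\<close>

definition monomial_act :: "(nat \<Rightarrow> nat) \<Rightarrow> (var \<Rightarrow>\<^sub>0 nat) \<Rightarrow> (var \<Rightarrow>\<^sub>0 nat)" where
  "monomial_act \<sigma> m = Poly_Mapping.map_key (vshift \<sigma>) m"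

lemma lookup_map_key:
  assumes "inj f"
  shows "Poly_Mapping.lookup (Poly_Mapping.map_key f p) x = Poly_Mapping.lookup p (f x)"
proof -
  have [transfer_rule]: "inj f" by fact
  show ?thesis by transfer simp
qed

lemma poly_mapping_monomial_expansion:
  "h = (\<Sum>M\<in>Poly_Mapping.keys h. Poly_Mapping.single M (Poly_Mapping.lookup h M))"
  by (rule poly_mapping_eqI)
    (simp add: lookup_sum lookup_single when_def sum.delta' in_keys_iff)

lemma inj_vshift: "inj \<sigma> \<Longrightarrow> inj (vshift \<sigma>)"
  by (auto simp: inj_def vshift_def prod_eq_iff)

lemma lookup_monomial_act:
  "inj \<sigma> \<Longrightarrow> Poly_Mapping.lookup (monomial_act \<sigma> m) (i, b) = Poly_Mapping.lookup m (\<sigma> i, b)"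
  by (simp add: monomial_act_def lookup_map_key inj_vshift vshift_def)

lemma monomial_act_comp:
  "bij \<sigma> \<Longrightarrow> bij \<tau> \<Longrightarrow> monomial_act \<tau> (monomial_act \<sigma> m) = monomial_act (\<sigma> \<circ> \<tau>) m"
  by (rule poly_mapping_eqI) (auto simp: lookup_monomial_act bij_def inj_compose)

lemma monomial_act_id: "monomial_act id m = m"
  by (rule poly_mapping_eqI) (auto simp: lookup_monomial_act)

lemma monomial_act_inv_cancel: "bij \<sigma> \<Longrightarrow> monomial_act \<sigma> (monomial_act (inv \<sigma>) m) = m"
  by (simp add: monomial_act_comp bij_imp_bij_inv bij_is_inj monomial_act_id)

lemma inj_monomial_act: "bij \<sigma> \<Longrightarrow> inj (monomial_act \<sigma>)"
  by (metis injI monomial_act_inv_cancel bij_imp_bij_inv inv_inv_eq)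

lemma monomial_act_add: "inj \<sigma> \<Longrightarrow> monomial_act \<sigma> (a + b) = monomial_act \<sigma> a + monomial_act \<sigma> b"
  by (simp add: monomial_act_def map_key_plus inj_vshift)

lemma monomial_act_single:
  assumes "bij \<sigma>"
  shows "monomial_act \<sigma> (Poly_Mapping.single (j, b) a) = Poly_Mapping.single (inv \<sigma> j, b) a"
proof -
  have "vshift \<sigma> (inv \<sigma> j, b) = (j, b)"
    using assms by (simp add: vshift_def bij_is_surj surj_f_inv_f)
  then show ?thesis
    using map_key_single[OF inj_vshift, of \<sigma> "(inv \<sigma> j, b)" a] assms
    by (simp add: monomial_act_def bij_is_inj)
qed

lemma pact_eq_map_key: "pact \<sigma> f = Poly_Mapping.map_key (monomial_act \<sigma>) f"
  by (simp add: pact_def monomial_act_def[abs_def])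

lemma lookup_pact:
  "bij \<sigma> \<Longrightarrow> Poly_Mapping.lookup (pact \<sigma> f) m = Poly_Mapping.lookup f (monomial_act \<sigma> m)"
  by (simp add: pact_eq_map_key lookup_map_key inj_monomial_act)

lemma pact_add: "bij \<sigma> \<Longrightarrow> pact \<sigma> (f + g) = pact \<sigma> f + pact \<sigma> g"
  by (rule poly_mapping_eqI) (simp add: lookup_pact lookup_add)

lemma pact_diff: "bij \<sigma> \<Longrightarrow> pact \<sigma> (f - g) = pact \<sigma> f - pact \<sigma> g"
  by (rule poly_mapping_eqI) (simp add: lookup_pact lookup_minus)

lemma pact_sum: "bij \<sigma> \<Longrightarrow> pact \<sigma> (sum F A) = (\<Sum>x\<in>A. pact \<sigma> (F x))"
  by (rule poly_mapping_eqI) (simp add: lookup_pact lookup_sum)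

lemma pact_inv_cancel: "bij \<sigma> \<Longrightarrow> pact \<sigma> (pact (inv \<sigma>) f) = f"
  by (rule poly_mapping_eqI)
    (metis lookup_pact bij_imp_bij_inv inv_inv_eq monomial_act_inv_cancel)

lemma pact_single:
  assumes "bij \<sigma>"
  shows "pact \<sigma> (Poly_Mapping.single M c) = Poly_Mapping.single (monomial_act (inv \<sigma>) M) c"
  using map_key_single[OF inj_monomial_act[OF assms], of "monomial_act (inv \<sigma>) M" c] assms
  by (simp add: pact_eq_map_key monomial_act_inv_cancel)

lemma pact_one: "bij \<sigma> \<Longrightarrow> pact \<sigma> 1 = 1"
  using pact_single[of \<sigma> 0 1]
  by (simp add: monomial_act_def inj_vshift bij_is_inj bij_imp_bij_inv)

section \<open>The subrings \<open>polyring k\<close>\<close>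

definition monomial_in :: "nat \<Rightarrow> (var \<Rightarrow>\<^sub>0 nat) \<Rightarrow> bool" where
  "monomial_in k m \<longleftrightarrow> (\<forall>v\<in>Poly_Mapping.keys m. fst v \<in> {1..k})"

lemma polyring_iff: "f \<in> polyring k \<longleftrightarrow> (\<forall>m\<in>Poly_Mapping.keys f. monomial_in k m)"
  by (simp add: polyring_def monomial_in_def)

lemma polyring_mono: "k \<le> n \<Longrightarrow> polyring k \<subseteq> polyring n"
  by (force simp: polyring_def)

lemma monomial_in_add: "monomial_in k a \<Longrightarrow> monomial_in k b \<Longrightarrow> monomial_in k (a + b)"
  using keys_add[of a b] by (auto simp: monomial_in_def)

lemma polyring_single: "monomial_in k M \<Longrightarrow> Poly_Mapping.single M c \<in> polyring k"
  by (simp add: polyring_iff)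

lemma polyring_zero: "0 \<in> polyring k"
  by (simp add: polyring_def)

lemma polyring_cst: "Poly_Mapping.single 0 c \<in> polyring k"
  by (simp add: polyring_single monomial_in_def)

lemma polyring_one: "1 \<in> polyring k"
  using polyring_cst[of 1 k] by simp

lemma polyring_add: "f \<in> polyring k \<Longrightarrow> g \<in> polyring k \<Longrightarrow> f + g \<in> polyring k"
  using keys_add[of f g] by (auto simp: polyring_iff)

lemma polyring_uminus: "f \<in> polyring k \<Longrightarrow> - f \<in> polyring k"
  by (simp add: polyring_def)

lemma polyring_diff: "f \<in> polyring k \<Longrightarrow> g \<in> polyring k \<Longrightarrow> f - g \<in> polyring k"
  using polyring_add[OF _ polyring_uminus] by (metis diff_conv_add_uminus)

lemma polyring_mult: "f \<in> polyring k \<Longrightarrow> g \<in> polyring k \<Longrightarrow> f * g \<in> polyring k"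
  using keys_mult[of f g] by (fastforce simp: polyring_iff intro: monomial_in_add)

lemma polyring_sum: "(\<And>x. x \<in> A \<Longrightarrow> F x \<in> polyring k) \<Longrightarrow> sum F A \<in> polyring k"
  by (induction A rule: infinite_finite_induct) (auto simp: polyring_zero polyring_add)

lemma monomial_act_fixes_monomial:
  assumes p: "\<sigma> permutes S" and S: "S \<inter> {1..k} = {}" and m: "monomial_in k m"
  shows "monomial_act \<sigma> m = m"
proof (rule poly_mapping_eqI)
  fix v :: var
  obtain i b where v: "v = (i, b)" by (cases v)
  have inj: "inj \<sigma>" using p by (simp add: permutes_bij bij_is_inj)
  consider "\<sigma> i = i" | "i \<notin> {1..k}" "\<sigma> i \<notin> {1..k}"
    using S permutes_not_in[OF p] permutes_in_image[OF p, of i] by blast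
  then show "Poly_Mapping.lookup (monomial_act \<sigma> m) v = Poly_Mapping.lookup m v"
  proof cases
    case 1
    then show ?thesis using inj by (simp add: v lookup_monomial_act)
  next
    case 2
    then have "(i, b) \<notin> Poly_Mapping.keys m" "(\<sigma> i, b) \<notin> Poly_Mapping.keys m"
      using m by (auto simp: monomial_in_def)
    then show ?thesis using inj by (simp add: v lookup_monomial_act in_keys_iff)
  qed
qed

lemma pact_fixes_polyring:
  assumes p: "\<sigma> permutes S" and S: "S \<inter> {1..k} = {}" and f: "f \<in> polyring k"
  shows "pact \<sigma> f = f"
proof (rule poly_mapping_eqI)
  fix m
  have bij: "bij \<sigma>" using p by (rule permutes_bij)
  have "monomial_act \<sigma> m = m"
    if "monomial_in k m \<or> monomial_in k (monomial_act \<sigma> m)"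
    using that
  proof
    assume "monomial_in k (monomial_act \<sigma> m)"
    then have "monomial_act (inv \<sigma>) (monomial_act \<sigma> m) = monomial_act \<sigma> m"
      using monomial_act_fixes_monomial[OF permutes_inv[OF p] S] by blast
    then show ?thesis
      using monomial_act_inv_cancel[OF bij_imp_bij_inv[OF bij], of m] bij by (simp add: inv_inv_eq)
  qed (rule monomial_act_fixes_monomial[OF p S])
  then show "Poly_Mapping.lookup (pact \<sigma> f) m = Poly_Mapping.lookup f m"
    using f bij by (metis lookup_pact polyring_iff in_keys_iff)
qed

section \<open>Power sums\<close>

definition xy_exponent :: "nat \<Rightarrow> nat \<Rightarrow> nat \<Rightarrow> (var \<Rightarrow>\<^sub>0 nat)" where
  "xy_exponent j a b = Poly_Mapping.single (j, False) a + Poly_Mapping.single (j, True) b"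

definition xy_power :: "nat \<Rightarrow> nat \<Rightarrow> nat \<Rightarrow> cpoly" where
  "xy_power j a b = Poly_Mapping.single (xy_exponent j a b) 1"

definition power_sum :: "nat \<Rightarrow> nat \<Rightarrow> nat \<Rightarrow> cpoly" where
  "power_sum n a b = (\<Sum>j\<in>{1..n}. xy_power j a b)"

lemma xy_power_in_polyring: "j \<in> {1..k} \<Longrightarrow> xy_power j a b \<in> polyring k"
  unfolding xy_power_def
  by (rule polyring_single)
    (use keys_add[of "Poly_Mapping.single (j, False) a" "Poly_Mapping.single (j, True) b"]
      in \<open>auto simp: xy_exponent_def monomial_in_def split: if_splits\<close>)

lemma monomial_act_xy_exponent:
  "bij \<sigma> \<Longrightarrow> monomial_act \<sigma> (xy_exponent j a b) = xy_exponent (inv \<sigma> j) a b"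
  by (simp add: xy_exponent_def monomial_act_add bij_is_inj monomial_act_single)

lemma pact_xy_power: "bij \<sigma> \<Longrightarrow> pact \<sigma> (xy_power j a b) = xy_power (\<sigma> j) a b"
  by (simp add: xy_power_def pact_single monomial_act_xy_exponent bij_imp_bij_inv inv_inv_eq)

lemma power_sum_in_polyring: "power_sum n a b \<in> polyring n"
  unfolding power_sum_def by (rule polyring_sum, rule xy_power_in_polyring)

lemma pact_power_sum:
  assumes "\<sigma> permutes {1..n}"
  shows "pact \<sigma> (power_sum n a b) = power_sum n a b"
  unfolding power_sum_def
  using sum.reindex_bij_betw[OF permutes_imp_bij[OF assms], of "\<lambda>j. xy_power j a b"] assms
  by (simp add: pact_sum permutes_bij pact_xy_power)

lemma monomial_split_last:
  assumes "monomial_in (Suc k) M"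
  shows "\<exists>M' a b. monomial_in k M' \<and> M = M' + xy_exponent (Suc k) a b"
proof (intro exI conjI)
  let ?a = "Poly_Mapping.lookup M (Suc k, False)" and ?b = "Poly_Mapping.lookup M (Suc k, True)"
  define M' where "M' = M - Poly_Mapping.single (Suc k, False) ?a - Poly_Mapping.single (Suc k, True) ?b"
  have lookup_M': "Poly_Mapping.lookup M' v = (if fst v = Suc k then 0 else Poly_Mapping.lookup M v)" for v
    by (cases v) (auto simp: M'_def lookup_minus lookup_single when_def)
  show "monomial_in k M'"
    unfolding monomial_in_def
  proof
    fix v assume "v \<in> Poly_Mapping.keys M'"
    then have "fst v \<noteq> Suc k" "v \<in> Poly_Mapping.keys M"
      by (auto simp: in_keys_iff lookup_M' split: if_splits)
    then show "fst v \<in> {1..k}" using assms by (auto simp: monomial_in_def)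
  qed
  show "M = M' + xy_exponent (Suc k) ?a ?b"
    by (rule poly_mapping_eqI)
      (auto simp: lookup_M' xy_exponent_def lookup_add lookup_single when_def)
qed

lemma pact_transpose_monomial:
  assumes M: "monomial_in k M" and "k < j"
  shows "pact (transpose (Suc k) j) (Poly_Mapping.single (M + xy_exponent (Suc k) a b) c)
    = Poly_Mapping.single M c * xy_power j a b"
proof -
  let ?t = "transpose (Suc k) j"
  have "?t permutes {Suc k, j}" by (simp add: permutes_swap_id)
  moreover have "{Suc k, j} \<inter> {1..k} = {}" using \<open>k < j\<close> by auto
  ultimately have "monomial_act ?t M = M" using M by (rule monomial_act_fixes_monomial)
  then show ?thesis
    by (simp add: pact_single monomial_act_add monomial_act_xy_exponent xy_power_def mult_single)
qed

lemma pact_image_coset: "bij \<sigma> \<Longrightarrow> pact \<sigma> ` coset I g = coset (pact \<sigma> ` I) (pact \<sigma> g)"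
  by (simp add: coset_def setcompr_eq_image image_image pact_add)

lemma coset_subset:
  assumes add: "\<And>a b. a \<in> I \<Longrightarrow> b \<in> I \<Longrightarrow> a + b \<in> I" and fg: "f - g \<in> I"
  shows "coset I f \<subseteq> coset I g"
proof
  fix x assume "x \<in> coset I f"
  then obtain a where "a \<in> I" "x = f + a" by (auto simp: coset_def)
  then have "x = g + ((f - g) + a)" "(f - g) + a \<in> I" using add fg by auto
  then show "x \<in> coset I g" unfolding coset_def by blast
qed

lemma coset_eq_iff:
  assumes zero: "0 \<in> I" and diff: "\<And>a b. a \<in> I \<Longrightarrow> b \<in> I \<Longrightarrow> a - b \<in> I"
  shows "coset I f = coset I g \<longleftrightarrow> f - g \<in> I"
proof
  assume "coset I f = coset I g"
  moreover have "f \<in> coset I f" using zero by (force simp: coset_def)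
  ultimately show "f - g \<in> I" by (auto simp: coset_def)
next
  assume fg: "f - g \<in> I"
  have add: "a + b \<in> I" if "a \<in> I" "b \<in> I" for a b
    using diff[OF that(1) diff[OF zero that(2)]] by simp
  have "g - f \<in> I" using diff[OF zero fg] by simp
  then show "coset I f = coset I g"
    using coset_subset[OF add fg] coset_subset[OF add] by blast
qed

lemma induced_map_coset:
  assumes "I \<subseteq> J" "0 \<in> I" and add: "\<And>a b. a \<in> J \<Longrightarrow> b \<in> J \<Longrightarrow> a + b \<in> J"
  shows "induced_map J (coset I g) = coset J g"
proof
  show "induced_map J (coset I g) \<subseteq> coset J g"
    using assms by (force simp: induced_map_def coset_def add.assoc)
  show "coset J g \<subseteq> induced_map J (coset I g)"
    using \<open>0 \<in> I\<close> by (force simp: induced_map_def coset_def)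
qed

lemma regrep_invariant_constant:
  assumes g: "g \<in> regrep n" and inv: "\<And>\<sigma>. \<sigma> permutes {1..n} \<Longrightarrow> regact \<sigma> g = g"
  shows "g \<tau> = (if \<tau> permutes {1..n} then g id else 0)"
proof (cases "\<tau> permutes {1..n}")
  case True
  then have "g \<tau> = g (inv \<tau> \<circ> \<tau>)"
    using fun_cong[OF inv[OF True], of \<tau>] by (simp add: regact_def)
  then show ?thesis using True by (simp add: permutes_inv_o)
qed (use g in \<open>simp add: regrep_def\<close>)

section \<open>Clusters\<close>

locale Sn_cluster =
  fixes n :: nat and J :: "cpoly set" and \<phi> :: "cpoly \<Rightarrow> (nat \<Rightarrow> nat) \<Rightarrow> complex"
  assumes ideal: "is_ideal_in (polyring n) J"
    and pact_closed: "\<And>\<sigma> f. \<sigma> permutes {1..n} \<Longrightarrow> f \<in> J \<Longrightarrow> pact \<sigma> f \<in> J"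
    and \<phi>_add: "\<And>f g. f \<in> polyring n \<Longrightarrow> g \<in> polyring n \<Longrightarrow> \<phi> (f + g) = (\<lambda>\<tau>. \<phi> f \<tau> + \<phi> g \<tau>)"
    and \<phi>_cscale: "\<And>c f. f \<in> polyring n \<Longrightarrow> \<phi> (cscale c f) = (\<lambda>\<tau>. c * \<phi> f \<tau>)"
    and \<phi>_image: "\<phi> ` polyring n = regrep n"
    and \<phi>_kernel: "\<And>f. f \<in> polyring n \<Longrightarrow> \<phi> f = (\<lambda>\<tau>. 0) \<longleftrightarrow> f \<in> J"
    and \<phi>_equivariant: "\<And>\<sigma> f. \<sigma> permutes {1..n} \<Longrightarrow> f \<in> polyring n \<Longrightarrow> \<phi> (pact \<sigma> f) = regact \<sigma> (\<phi> f)"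

lemma Sn_cluster_ideal_imp_Sn_cluster:
  "Sn_cluster_ideal n J \<Longrightarrow> \<exists>\<phi>. Sn_cluster n J \<phi>"
  unfolding Sn_cluster_ideal_def by (elim conjE exE, rule exI, rule Sn_cluster.intro) auto

context Sn_cluster
begin

lemma J_zero: "0 \<in> J"
  using ideal by (simp add: is_ideal_in_def)

lemma J_add: "a \<in> J \<Longrightarrow> b \<in> J \<Longrightarrow> a + b \<in> J"
  using ideal by (simp add: is_ideal_in_def)

lemma J_mult: "r \<in> polyring n \<Longrightarrow> a \<in> J \<Longrightarrow> r * a \<in> J"
  using ideal by (simp add: is_ideal_in_def)

lemma J_uminus: "a \<in> J \<Longrightarrow> - a \<in> J"
  using J_mult[OF polyring_cst[of "-1"]] by (simp add: single_uminus)

lemma J_diff: "a \<in> J \<Longrightarrow> b \<in> J \<Longrightarrow> a - b \<in> J"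
  using J_add[OF _ J_uminus] by (metis diff_conv_add_uminus)

lemma J_sum: "(\<And>x. x \<in> A \<Longrightarrow> F x \<in> J) \<Longrightarrow> sum F A \<in> J"
  by (induction A rule: infinite_finite_induct) (auto simp: J_zero J_add)

lemma pact_image_J:
  assumes "\<sigma> permutes {1..n}"
  shows "pact \<sigma> ` J = J"
proof
  show "pact \<sigma> ` J \<subseteq> J" using pact_closed[OF assms] by blast
  show "J \<subseteq> pact \<sigma> ` J"
    using pact_closed[OF permutes_inv[OF assms]] pact_inv_cancel[OF permutes_bij[OF assms]]
    by (metis image_eqI subsetI)
qed

lemma phi_invariant_constant:
  assumes f: "f \<in> polyring n" and inv: "\<And>\<sigma>. \<sigma> permutes {1..n} \<Longrightarrow> pact \<sigma> f = f"
  shows "\<phi> f \<tau> = (if \<tau> permutes {1..n} then \<phi> f id else 0)"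
proof (rule regrep_invariant_constant)
  show "\<phi> f \<in> regrep n" using f \<phi>_image by blast
  show "regact \<sigma> (\<phi> f) = \<phi> f" if "\<sigma> permutes {1..n}" for \<sigma>
    using \<phi>_equivariant[OF that f] inv[OF that] by simp
qed

lemma one_notin_J: "1 \<notin> J"
proof
  assume one: "1 \<in> J"
  have vanish: "\<phi> f = (\<lambda>\<tau>. 0)" if "f \<in> polyring n" for f
    using J_mult[OF that one] \<phi>_kernel[OF that] by simp
  have "(\<lambda>\<tau>. if \<tau> = id then 1 else 0) \<in> \<phi> ` polyring n"
    unfolding \<phi>_image by (auto simp: regrep_def permutes_id)
  then obtain f where \<delta>: "(\<lambda>\<tau>. if \<tau> = id then 1 else 0) = \<phi> f" and f: "f \<in> polyring n"
    by (rule imageE)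
  have "\<phi> f id = 1" using \<delta>[symmetric] by simp
  then show False using vanish[OF f] by simp
qed

lemma phi_one_nonzero: "\<phi> 1 id \<noteq> 0"
proof
  assume zero: "\<phi> 1 id = 0"
  have "\<phi> 1 = (\<lambda>\<tau>. 0)"
  proof
    fix \<tau>
    show "\<phi> 1 \<tau> = 0"
      using phi_invariant_constant[OF polyring_one pact_one[OF permutes_bij], where \<tau> = \<tau>] zero by simp
  qed
  then show False using one_notin_J \<phi>_kernel[OF polyring_one] by simp
qed

lemma invariant_congruent_constant:
  assumes f: "f \<in> polyring n" and inv: "\<And>\<sigma>. \<sigma> permutes {1..n} \<Longrightarrow> pact \<sigma> f = f"
  shows "\<exists>d. f - Poly_Mapping.single 0 d \<in> J"
proof
  define d where "d = \<phi> f id / \<phi> 1 id"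
  have cscale_one: "cscale (- d) 1 = Poly_Mapping.single 0 (- d)"
    by (simp only: cscale_def mult_map_scale_conv_mult mult_1_right)
  have "\<phi> (f + cscale (- d) 1) = (\<lambda>\<tau>. 0)"
  proof
    fix \<tau>
    have "\<phi> (f + cscale (- d) 1) \<tau> = \<phi> f \<tau> - d * \<phi> 1 \<tau>"
      using \<phi>_add[OF f, of "cscale (- d) 1"] \<phi>_cscale[OF polyring_one, of "- d"]
      by (simp add: cscale_one polyring_cst)
    also have "\<dots> = 0"
      using phi_invariant_constant[OF f inv, where \<tau> = \<tau>] phi_one_nonzero
        phi_invariant_constant[OF polyring_one pact_one[OF permutes_bij], where \<tau> = \<tau>]
      by (simp add: d_def)
    finally show "\<phi> (f + cscale (- d) 1) \<tau> = 0" .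
  qed
  then have "f + cscale (- d) 1 \<in> J"
    using \<phi>_kernel[of "f + cscale (- d) 1"] f by (simp add: cscale_one polyring_add polyring_cst)
  then show "f - Poly_Mapping.single 0 d \<in> J"
    by (simp add: cscale_one single_uminus)
qed

lemma power_sum_congruent_constant: "\<exists>d. power_sum n a b - Poly_Mapping.single 0 d \<in> J"
  by (rule invariant_congruent_constant[OF power_sum_in_polyring pact_power_sum])

definition has_rep_in :: "nat \<Rightarrow> cpoly \<Rightarrow> bool" where
  "has_rep_in k f \<longleftrightarrow> (\<exists>g\<in>polyring k. f - g \<in> J)"

lemma has_rep_in_polyring: "g \<in> polyring k \<Longrightarrow> has_rep_in k g"
  using J_zero unfolding has_rep_in_def by (intro bexI[of _ g]) simp_all

lemma has_rep_in_congruent: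
  assumes "f - f' \<in> J" "has_rep_in k f'"
  shows "has_rep_in k f"
proof -
  obtain g where g: "g \<in> polyring k" "f' - g \<in> J" using assms(2) by (auto simp: has_rep_in_def)
  have "(f - f') + (f' - g) \<in> J" using J_add[OF assms(1) g(2)] .
  then have "f - g \<in> J" by (simp add: algebra_simps)
  with g(1) show ?thesis unfolding has_rep_in_def by blast
qed

lemma has_rep_in_add:
  assumes "has_rep_in k f" "has_rep_in k f'"
  shows "has_rep_in k (f + f')"
proof -
  obtain g g' where g: "g \<in> polyring k" "f - g \<in> J" and g': "g' \<in> polyring k" "f' - g' \<in> J"
    using assms by (auto simp: has_rep_in_def)
  have "(f - g) + (f' - g') \<in> J" using J_add[OF g(2) g'(2)] .
  then have "(f + f') - (g + g') \<in> J" by (simp add: algebra_simps)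
  with polyring_add[OF g(1) g'(1)] show ?thesis unfolding has_rep_in_def by blast
qed

lemma has_rep_in_sum: "(\<And>x. x \<in> A \<Longrightarrow> has_rep_in k (F x)) \<Longrightarrow> has_rep_in k (sum F A)"
  by (induction A rule: infinite_finite_induct)
    (auto simp: has_rep_in_polyring polyring_zero has_rep_in_add)

lemma has_rep_in_mult:
  assumes "k \<le> n" "r \<in> polyring k" "has_rep_in k f"
  shows "has_rep_in k (r * f)"
proof -
  obtain g where g: "g \<in> polyring k" "f - g \<in> J" using assms(3) by (auto simp: has_rep_in_def)
  have "r \<in> polyring n" using assms(1,2) polyring_mono by blast
  then have "r * (f - g) \<in> J" using g(2) by (rule J_mult)
  then have "r * f - r * g \<in> J" by (simp add: right_diff_distrib)
  with polyring_mult[OF assms(2) g(1)] show ?thesis unfolding has_rep_in_def by blast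
qed

lemma transposition_sum_monomial_has_rep:
  assumes kn: "Suc k \<le> n" and M: "monomial_in (Suc k) M"
  shows "has_rep_in k (\<Sum>j\<in>{Suc k..n}. pact (transpose (Suc k) j) (Poly_Mapping.single M c))"
proof -
  obtain M' a b where M': "monomial_in k M'" and M_eq: "M = M' + xy_exponent (Suc k) a b"
    using monomial_split_last[OF M] by blast
  let ?head = "\<Sum>j\<in>{1..k}. xy_power j a b" and ?tail = "\<Sum>j\<in>{Suc k..n}. xy_power j a b"
  have "(\<Sum>j\<in>{Suc k..n}. pact (transpose (Suc k) j) (Poly_Mapping.single M c))
      = Poly_Mapping.single M' c * ?tail"
    unfolding M_eq sum_distrib_left by (rule sum.cong) (auto simp: pact_transpose_monomial[OF M'])
  moreover obtain d where d: "power_sum n a b - Poly_Mapping.single 0 d \<in> J"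
    using power_sum_congruent_constant by blast
  have "power_sum n a b = ?head + ?tail"
    unfolding power_sum_def using kn by (subst sum.union_disjoint[symmetric]) (auto intro: sum.cong)
  then have "?tail - (Poly_Mapping.single 0 d - ?head) \<in> J"
    using d by (simp add: algebra_simps)
  then have "has_rep_in k ?tail"
    using has_rep_in_polyring[OF polyring_diff[OF polyring_cst polyring_sum[OF xy_power_in_polyring]]]
    by (rule has_rep_in_congruent)
  ultimately show ?thesis
    using has_rep_in_mult kn M' polyring_single by simp
qed

lemma transposition_sum_has_rep:
  assumes kn: "Suc k \<le> n" and h: "h \<in> polyring (Suc k)"
  shows "has_rep_in k (\<Sum>j\<in>{Suc k..n}. pact (transpose (Suc k) j) h)"
proof -
  let ?T = "\<lambda>f. \<Sum>j\<in>{Suc k..n}. pact (transpose (Suc k) j) f"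
  let ?s = "\<lambda>M. Poly_Mapping.single M (Poly_Mapping.lookup h M)"
  have "?T h = ?T (\<Sum>M\<in>Poly_Mapping.keys h. ?s M)"
    by (subst poly_mapping_monomial_expansion[of h]) (rule refl)
  also have "\<dots> = (\<Sum>M\<in>Poly_Mapping.keys h. ?T (?s M))"
    unfolding pact_sum[OF bij_transpose] by (rule sum.swap)
  finally show ?thesis
    using h transposition_sum_monomial_has_rep[OF kn]
    by (simp add: has_rep_in_sum polyring_iff)
qed

lemma has_rep_in_if_transposition_invariant:
  assumes kn: "Suc k \<le> n" and h: "h \<in> polyring (Suc k)"
    and inv: "\<And>j. j \<in> {Suc k..n} \<Longrightarrow> pact (transpose (Suc k) j) h - h \<in> J"
  shows "has_rep_in k h"
proof -
  let ?T = "\<Sum>j\<in>{Suc k..n}. pact (transpose (Suc k) j) h"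
  define m where "m = n - k"
  have m: "(of_nat m :: complex) \<noteq> 0" using kn by (simp add: m_def)
  have "(\<Sum>j\<in>{Suc k..n}. pact (transpose (Suc k) j) h - h) \<in> J"
    using inv by (rule J_sum)
  then have "of_nat m * h - ?T \<in> J"
    using J_uminus by (fastforce simp: sum_subtractf m_def)
  then have "has_rep_in k (of_nat m * h)"
    using transposition_sum_has_rep[OF kn h] by (rule has_rep_in_congruent)
  then have "has_rep_in k (Poly_Mapping.single 0 (1 / of_nat m) * (of_nat m * h))"
    using kn by (auto intro: has_rep_in_mult[OF _ polyring_cst])
  \<comment> \<open>Dividing by \<open>n - k\<close> is where characteristic zero is used.\<close>
  moreover have "Poly_Mapping.single 0 (1 / of_nat m) * of_nat m = (1 :: cpoly)"
    using m by (simp add: mult_single of_nat_single del: single_of_nat)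
  ultimately show ?thesis by (simp add: mult.assoc[symmetric])
qed

lemma has_rep_in_if_invariant:
  assumes f: "f \<in> polyring n"
  shows "k \<le> n \<Longrightarrow> (\<And>\<sigma>. \<sigma> permutes {Suc k..n} \<Longrightarrow> pact \<sigma> f - f \<in> J) \<Longrightarrow> has_rep_in k f"
proof (induction k rule: inc_induct)
  case base
  show ?case using f by (rule has_rep_in_polyring)
next
  case (step k)
  have "pact \<sigma> f - f \<in> J" if "\<sigma> permutes {Suc (Suc k)..n}" for \<sigma>
    using step.prems permutes_subset[OF that] by auto
  then obtain h where h: "h \<in> polyring (Suc k)" "f - h \<in> J"
    using step.IH by (auto simp: has_rep_in_def)
  have "pact (transpose (Suc k) j) h - h \<in> J" if "j \<in> {Suc k..n}" for j
  proof -
    let ?t = "transpose (Suc k) j"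
    have t: "?t permutes {Suc k..n}" using that step.hyps by (intro permutes_swap_id) auto
    then have "pact ?t (h - f) + (pact ?t f - f) + (f - h) \<in> J"
      using h J_uminus[OF h(2)] permutes_subset[OF t, of "{1..n}"]
      by (intro J_add pact_closed step.prems) auto
    then show ?thesis by (simp add: pact_diff)
  qed
  then have "has_rep_in k h"
    using step.hyps h(1) by (intro has_rep_in_if_transposition_invariant) auto
  then show ?case by (rule has_rep_in_congruent[OF h(2)])
qed

lemma invariant_classes_eq:
  assumes "k \<le> n"
  shows "invariant_classes n k J = coset J ` polyring k"
proof
  show "invariant_classes n k J \<subseteq> coset J ` polyring k"
  proof
    fix C assume C: "C \<in> invariant_classes n k J"
    then obtain f where f: "f \<in> polyring n" "C = coset J f"
      by (auto simp: invariant_classes_def quotient_space_def)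
    have "pact \<sigma> f - f \<in> J" if "\<sigma> permutes {Suc k..n}" for \<sigma>
    proof -
      have "f \<in> C" using f(2) J_zero by (force simp: coset_def)
      then have "pact \<sigma> f \<in> C" using C that by (auto simp: invariant_classes_def)
      then show ?thesis using f(2) by (auto simp: coset_def)
    qed
    then obtain g where "g \<in> polyring k" "f - g \<in> J"
      using has_rep_in_if_invariant[OF f(1) assms] by (auto simp: has_rep_in_def)
    then show "C \<in> coset J ` polyring k"
      using f(2) coset_eq_iff[OF J_zero J_diff] by auto
  qed
  show "coset J ` polyring k \<subseteq> invariant_classes n k J"
  proof clarify
    fix g assume g: "g \<in> polyring k"
    have "pact \<sigma> ` coset J g = coset J g" if "\<sigma> permutes {k + 1..n}" for \<sigma>
    proof -
      have "\<sigma> permutes {1..n}" using that by (rule permutes_subset) auto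
      moreover have "pact \<sigma> g = g" by (rule pact_fixes_polyring[OF that _ g]) auto
      ultimately show ?thesis by (simp add: pact_image_coset permutes_bij pact_image_J)
    qed
    then show "coset J g \<in> invariant_classes n k J"
      using g polyring_mono[OF assms]
      by (auto simp: invariant_classes_def quotient_space_def)
  qed
qed

end

theorem lemma3:
  fixes n k :: nat and J :: "cpoly set"
  assumes "Sn_cluster_ideal n J"
    and "1 \<le> k" and "k \<le> n"
  shows "bij_betw (induced_map J)
           (quotient_space (polyring k) (J \<inter> polyring k))
           (invariant_classes n k J)"
proof -
  obtain \<phi> where "Sn_cluster n J \<phi>"
    using Sn_cluster_ideal_imp_Sn_cluster[OF assms(1)] by blast
  then interpret Sn_cluster n J \<phi> .
  let ?I = "J \<inter> polyring k"
  have I_subgroup: "0 \<in> ?I" "\<And>a b. a \<in> ?I \<Longrightarrow> b \<in> ?I \<Longrightarrow> a - b \<in> ?I"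
    using J_zero J_diff polyring_zero polyring_diff by auto
  have induced: "induced_map J (coset ?I g) = coset J g" for g
    using J_zero polyring_zero by (intro induced_map_coset J_add) auto
  have "inj_on (induced_map J) (coset ?I ` polyring k)"
  proof (rule inj_onI, clarify)
    fix f g assume f: "f \<in> polyring k" and g: "g \<in> polyring k"
      and "induced_map J (coset ?I f) = induced_map J (coset ?I g)"
    then have "f - g \<in> J" by (simp add: induced coset_eq_iff[OF J_zero J_diff])
    then show "coset ?I f = coset ?I g" using f g coset_eq_iff[OF I_subgroup] polyring_diff by blast
  qed
  then show ?thesis
    unfolding bij_betw_def quotient_space_def invariant_classes_eq[OF assms(3)]
    by (simp add: image_image induced)
qed

end
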